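(* Fix a positive integer $n$. For a prime power $q$, let $p_r(q,n)$ denote the probability that a uniformly random differential on ${\mathbb F}_q^n$ has $r$-dimensional homology. Then for every $r>1$ with $r\equiv n \pmod 2$, $\lim_{q\to\infty} p_r(q,n)=0$. Moreover, $\lim_{q\to\infty}p_0(q,n)=1$ if $n$ is even, and $\lim_{q\to\infty}p_1(q,n)=1$ if $n$ is odd. (Here $q$ ranges over prime powers.) *)

theory Defs
  imports "HOL-Algebra.Ring" "HOL-Algebra.Ring_Divisibility"
begin

definition vecs :: "('a, 'b) ring_scheme \<Rightarrow> nat \<Rightarrow> (nat \<Rightarrow> 'a) set" where
  "vecs R n = {v. (\<forall>i<n. v i \<in> carrier R) \<and> (\<forall>i\<ge>n. v i = \<zero>\<^bsub>R\<^esub>)}"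

definition zvec :: "('a, 'b) ring_scheme \<Rightarrow> nat \<Rightarrow> 'a" where
  "zvec R = (\<lambda>i. \<zero>\<^bsub>R\<^esub>)"

definition mats :: "('a, 'b) ring_scheme \<Rightarrow> nat \<Rightarrow> (nat \<Rightarrow> nat \<Rightarrow> 'a) set" where
  "mats R n = {M. (\<forall>i j. (i < n \<and> j < n \<longrightarrow> M i j \<in> carrier R)
                    \<and> (\<not> (i < n \<and> j < n) \<longrightarrow> M i j = \<zero>\<^bsub>R\<^esub>))}"

definition mat_vec :: "('a, 'b) ring_scheme \<Rightarrow> nat \<Rightarrow> (nat \<Rightarrow> nat \<Rightarrow> 'a) \<Rightarrow> (nat \<Rightarrow> 'a) \<Rightarrow> (nat \<Rightarrow> 'a)" where
  "mat_vec R n M v = (\<lambda>i. if i < n then finsum R (\<lambda>k. M i k \<otimes>\<^bsub>R\<^esub> v k) {..<n} else \<zero>\<^bsub>R\<^esub>)"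

definition mat_mult :: "('a, 'b) ring_scheme \<Rightarrow> nat \<Rightarrow> (nat \<Rightarrow> nat \<Rightarrow> 'a) \<Rightarrow> (nat \<Rightarrow> nat \<Rightarrow> 'a) \<Rightarrow> (nat \<Rightarrow> nat \<Rightarrow> 'a)" where
  "mat_mult R n M N = (\<lambda>i j. if i < n \<and> j < n
      then finsum R (\<lambda>k. M i k \<otimes>\<^bsub>R\<^esub> N k j) {..<n} else \<zero>\<^bsub>R\<^esub>)"

definition differentials :: "('a, 'b) ring_scheme \<Rightarrow> nat \<Rightarrow> (nat \<Rightarrow> nat \<Rightarrow> 'a) set" where
  "differentials R n = {M \<in> mats R n. mat_mult R n M M = (\<lambda>i j. \<zero>\<^bsub>R\<^esub>)}"

definition lin_indep :: "('a, 'b) ring_scheme \<Rightarrow> nat \<Rightarrow> (nat \<Rightarrow> 'a) list \<Rightarrow> bool" where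
  "lin_indep R n vs \<longleftrightarrow>
     (\<forall>c. (\<forall>k < length vs. c k \<in> carrier R) \<longrightarrow>
          (\<lambda>i. finsum R (\<lambda>k. c k \<otimes>\<^bsub>R\<^esub> (vs ! k) i) {..<length vs}) = zvec R
          \<longrightarrow> (\<forall>k < length vs. c k = \<zero>\<^bsub>R\<^esub>))"

definition subdim :: "('a, 'b) ring_scheme \<Rightarrow> nat \<Rightarrow> (nat \<Rightarrow> 'a) set \<Rightarrow> nat" where
  "subdim R n W = Max {k. \<exists>vs. length vs = k \<and> set vs \<subseteq> W \<and> lin_indep R n vs}"

definition ker_d :: "('a, 'b) ring_scheme \<Rightarrow> nat \<Rightarrow> (nat \<Rightarrow> nat \<Rightarrow> 'a) \<Rightarrow> (nat \<Rightarrow> 'a) set" where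
  "ker_d R n M = {v \<in> vecs R n. mat_vec R n M v = zvec R}"

definition im_d :: "('a, 'b) ring_scheme \<Rightarrow> nat \<Rightarrow> (nat \<Rightarrow> nat \<Rightarrow> 'a) \<Rightarrow> (nat \<Rightarrow> 'a) set" where
  "im_d R n M = mat_vec R n M ` vecs R n"

definition homology_dim :: "('a, 'b) ring_scheme \<Rightarrow> nat \<Rightarrow> (nat \<Rightarrow> nat \<Rightarrow> 'a) \<Rightarrow> nat" where
  "homology_dim R n M = subdim R n (ker_d R n M) - subdim R n (im_d R n M)"

definition prob_hom :: "('a, 'b) ring_scheme \<Rightarrow> nat \<Rightarrow> nat \<Rightarrow> real" where
  "prob_hom R n r = real (card {M \<in> differentials R n. homology_dim R n M = r})
                    / real (card (differentials R n))"

end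

theory Submission
  imports Defs
begin

text \<open>A differential d on F_q^n of rank m has homology of dimension n - 2m, so the claim is
  that almost every differential has the maximal rank k = n div 2. Given an ordered basis of
  im d, the map d sends F_q^n into its span and kills it; counting pairs (d, basis of im d)
  therefore bounds the number of differentials of rank m by 2^m q^(2m(n-m)). Conversely, an
  explicit injective family of differentials shows that there are at least q^(2k(n-k)) / 2^k
  differentials in total. As 2m(n-m) < 2k(n-k) for m < k, the differentials of rank below k
  form a proportion O(1/q).\<close>

lemma (in abelian_monoid) finsum_swap:
  assumes "finite A" "finite B" "\<And>i j. i \<in> A \<Longrightarrow> j \<in> B \<Longrightarrow> f i j \<in> carrier G"
  shows "(\<Oplus>i\<in>A. \<Oplus>j\<in>B. f i j) = (\<Oplus>j\<in>B. \<Oplus>i\<in>A. f i j)"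
  using assms
proof (induction A rule: finite_induct)
  case empty
  then show ?case by (simp add: finsum_zero)
next
  case (insert a A)
  have "(\<Oplus>i\<in>insert a A. \<Oplus>j\<in>B. f i j) = (\<Oplus>j\<in>B. f a j) \<oplus> (\<Oplus>j\<in>B. \<Oplus>i\<in>A. f i j)"
    using insert by (subst finsum_insert) (auto intro!: finsum_closed)
  also have "\<dots> = (\<Oplus>j\<in>B. f a j \<oplus> (\<Oplus>i\<in>A. f i j))"
    using insert by (subst finsum_addf) (auto intro!: finsum_closed)
  also have "\<dots> = (\<Oplus>j\<in>B. \<Oplus>i\<in>insert a A. f i j)"
    using insert by (intro finsum_cong) (auto intro!: finsum_closed simp: finsum_insert)
  finally show ?case .
qed

lemma (in ring) finsum_a_inv:
  assumes "finite A" "\<And>i. i \<in> A \<Longrightarrow> f i \<in> carrier R"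
  shows "(\<Oplus>i\<in>A. \<ominus> f i) = \<ominus> (\<Oplus>i\<in>A. f i)"
  using assms
  by (induction A rule: finite_induct) (simp_all add: finsum_insert Pi_def finsum_closed minus_add)

lemma (in cring) finsum_mult_finsum:
  assumes "finite A" "finite B" "\<And>a. a \<in> A \<Longrightarrow> f a \<in> carrier R" "\<And>b. b \<in> B \<Longrightarrow> g b \<in> carrier R"
  shows "(\<Oplus>a\<in>A. f a) \<otimes> (\<Oplus>b\<in>B. g b) = (\<Oplus>a\<in>A. \<Oplus>b\<in>B. f a \<otimes> g b)"
proof -
  have "(\<Oplus>a\<in>A. f a) \<otimes> (\<Oplus>b\<in>B. g b) = (\<Oplus>a\<in>A. f a \<otimes> (\<Oplus>b\<in>B. g b))"
    using assms by (intro finsum_ldistr) (auto intro!: finsum_closed)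
  also have "\<dots> = (\<Oplus>a\<in>A. \<Oplus>b\<in>B. f a \<otimes> g b)"
    using assms by (intro finsum_cong) (auto simp: finsum_rdistr)
  finally show ?thesis .
qed

lemma (in cring) finsum_triple_product_zero:
  assumes fin: "finite A" "finite B" "finite L"
    and x: "\<And>a. a \<in> A \<Longrightarrow> x a \<in> carrier R"
    and r: "\<And>a l. a \<in> A \<Longrightarrow> l \<in> L \<Longrightarrow> r a l \<in> carrier R"
    and u: "\<And>l b. l \<in> L \<Longrightarrow> b \<in> B \<Longrightarrow> u l b \<in> carrier R"
    and y: "\<And>b. b \<in> B \<Longrightarrow> y b \<in> carrier R"
    and ru: "\<And>a b. a \<in> A \<Longrightarrow> b \<in> B \<Longrightarrow> (\<Oplus>l\<in>L. r a l \<otimes> u l b) = \<zero>"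
  shows "(\<Oplus>l\<in>L. (\<Oplus>a\<in>A. x a \<otimes> r a l) \<otimes> (\<Oplus>b\<in>B. u l b \<otimes> y b)) = \<zero>"
proof -
  note closed = x r u y fin
  let ?t = "\<lambda>a b l. x a \<otimes> r a l \<otimes> (u l b \<otimes> y b)"
  have "(\<Oplus>l\<in>L. (\<Oplus>a\<in>A. x a \<otimes> r a l) \<otimes> (\<Oplus>b\<in>B. u l b \<otimes> y b)) = (\<Oplus>l\<in>L. \<Oplus>a\<in>A. \<Oplus>b\<in>B. ?t a b l)"
    using closed by (intro finsum_cong) (auto simp: finsum_mult_finsum intro!: finsum_closed)
  also have "\<dots> = (\<Oplus>a\<in>A. \<Oplus>l\<in>L. \<Oplus>b\<in>B. ?t a b l)"
    using closed by (intro finsum_swap) (auto intro!: finsum_closed)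
  also have "\<dots> = (\<Oplus>a\<in>A. \<Oplus>b\<in>B. \<Oplus>l\<in>L. ?t a b l)"
  proof -
    have "(\<Oplus>l\<in>L. \<Oplus>b\<in>B. ?t a b l) = (\<Oplus>b\<in>B. \<Oplus>l\<in>L. ?t a b l)" if "a \<in> A" for a
      using that closed by (intro finsum_swap) auto
    then show ?thesis using closed by (intro finsum_cong) (auto intro!: finsum_closed)
  qed
  also have "\<dots> = (\<Oplus>a\<in>A. \<Oplus>b\<in>B. x a \<otimes> (\<Oplus>l\<in>L. r a l \<otimes> u l b) \<otimes> y b)"
  proof -
    have "(\<Oplus>l\<in>L. ?t a b l) = x a \<otimes> (\<Oplus>l\<in>L. r a l \<otimes> u l b) \<otimes> y b" if "a \<in> A" "b \<in> B" for a b
    proof -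
      have "(\<Oplus>l\<in>L. ?t a b l) = (\<Oplus>l\<in>L. x a \<otimes> (r a l \<otimes> u l b) \<otimes> y b)"
        using that closed by (intro finsum_cong) (auto simp: m_assoc)
      then show ?thesis using that closed by (simp add: finsum_ldistr finsum_rdistr Pi_def)
    qed
    then have "(\<Oplus>b\<in>B. \<Oplus>l\<in>L. ?t a b l) = (\<Oplus>b\<in>B. x a \<otimes> (\<Oplus>l\<in>L. r a l \<otimes> u l b) \<otimes> y b)"
      if "a \<in> A" for a
      using that closed by (intro finsum_cong) (auto intro!: finsum_closed)
    then show ?thesis using closed by (intro finsum_cong) (auto intro!: finsum_closed)
  qed
  also have "\<dots> = \<zero>"
    using closed ru by (simp add: finsum_zero cong: finsum_cong)
  finally show ?thesis .
qed

section \<open>Linear algebra over a finite field\<close>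

definition lincomb :: "('a, 'b) ring_scheme \<Rightarrow> (nat \<Rightarrow> 'a) \<Rightarrow> (nat \<Rightarrow> 'a) list \<Rightarrow> (nat \<Rightarrow> 'a)" where
  "lincomb R c vs = (\<lambda>i. finsum R (\<lambda>k. c k \<otimes>\<^bsub>R\<^esub> (vs ! k) i) {..<length vs})"

definition lin_span :: "('a, 'b) ring_scheme \<Rightarrow> (nat \<Rightarrow> 'a) list \<Rightarrow> (nat \<Rightarrow> 'a) set" where
  "lin_span R vs = (\<lambda>cs. lincomb R (nth cs) vs) ` {cs. set cs \<subseteq> carrier R \<and> length cs = length vs}"

definition lin_subspace :: "('a, 'b) ring_scheme \<Rightarrow> nat \<Rightarrow> (nat \<Rightarrow> 'a) set \<Rightarrow> bool" where
  "lin_subspace R n W \<longleftrightarrow> W \<subseteq> vecs R n \<and>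
     (\<forall>vs c. set vs \<subseteq> W \<and> (\<forall>k<length vs. c k \<in> carrier R) \<longrightarrow> lincomb R c vs \<in> W)"

definition tail_vecs :: "('a, 'b) ring_scheme \<Rightarrow> nat \<Rightarrow> nat \<Rightarrow> (nat \<Rightarrow> 'a) set" where
  "tail_vecs R n k = {v \<in> vecs R n. \<forall>j<k. v j = \<zero>\<^bsub>R\<^esub>}"

locale finite_field_space = field R for R :: "('a, 'b) ring_scheme" (structure) +
  fixes n :: nat
  assumes finite_carrier: "finite (carrier R)"
begin

abbreviation q where "q \<equiv> card (carrier R)"

lemma card_carrier_ge_2: "q \<ge> 2"
proof -
  have "card {\<zero>, \<one>} \<le> q" using finite_carrier by (intro card_mono) auto
  then show ?thesis by simp
qed

lemma q_power_le_imp_le: "q ^ a \<le> q ^ b \<Longrightarrow> a \<le> b"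
  using card_carrier_ge_2 power_le_imp_le_exp[of q a b] by simp

lemma q_power_inject: "q ^ a = q ^ b \<Longrightarrow> a = b"
  using q_power_le_imp_le[of a b] q_power_le_imp_le[of b a] by simp

lemma vecs_carrier: "v \<in> vecs R n \<Longrightarrow> v i \<in> carrier R"
  by (cases "i < n") (auto simp: vecs_def)

lemma vecs_zero: "v \<in> vecs R n \<Longrightarrow> \<not> i < n \<Longrightarrow> v i = \<zero>"
  by (auto simp: vecs_def)

lemma nth_vecs_carrier [simp]: "set vs \<subseteq> vecs R n \<Longrightarrow> k < length vs \<Longrightarrow> (vs ! k) i \<in> carrier R"
proof -
  assume "set vs \<subseteq> vecs R n" "k < length vs"
  then have "vs ! k \<in> vecs R n" by auto
  then show ?thesis by (rule vecs_carrier)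
qed

lemma lincomb_vecs:
  assumes "set vs \<subseteq> vecs R n" "\<And>k. k < length vs \<Longrightarrow> c k \<in> carrier R"
  shows "lincomb R c vs \<in> vecs R n"
proof -
  have "lincomb R c vs i \<in> carrier R" for i
    unfolding lincomb_def using assms by (auto intro!: finsum_closed)
  moreover have "lincomb R c vs i = \<zero>" if "\<not> i < n" for i
  proof -
    have "lincomb R c vs i = (\<Oplus>k\<in>{..<length vs}. \<zero>)"
      unfolding lincomb_def using assms that vecs_zero[OF subsetD[OF assms(1) nth_mem]]
      by (intro finsum_cong) auto
    then show ?thesis by (simp add: finsum_zero)
  qed
  ultimately show ?thesis unfolding vecs_def by (simp add: not_less[symmetric] del: nth_vecs_carrier)
qed

lemma lincomb_carrier [simp]:
  assumes "set vs \<subseteq> vecs R n" "\<And>k. k < length vs \<Longrightarrow> c k \<in> carrier R"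
  shows "lincomb R c vs i \<in> carrier R"
  using lincomb_vecs[OF assms] by (rule vecs_carrier)

lemma lincomb_cong:
  assumes "set vs \<subseteq> vecs R n" "\<And>k. k < length vs \<Longrightarrow> c k \<in> carrier R"
    "\<And>k. k < length vs \<Longrightarrow> c k = c' k"
  shows "lincomb R c vs = lincomb R c' vs"
  unfolding lincomb_def using assms by (intro ext finsum_cong) auto

lemma lincomb_in_lin_span:
  assumes "set vs \<subseteq> vecs R n" "\<And>k. k < length vs \<Longrightarrow> c k \<in> carrier R"
  shows "lincomb R c vs \<in> lin_span R vs"
proof -
  let ?cs = "map c [0..<length vs]"
  have "lincomb R (nth ?cs) vs = lincomb R c vs"
    using assms by (intro lincomb_cong) auto
  moreover have "set ?cs \<subseteq> carrier R \<and> length ?cs = length vs" using assms by auto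
  ultimately show ?thesis unfolding lin_span_def by (intro image_eqI[where x="?cs"]) auto
qed

lemma in_lin_span_iff:
  assumes "set vs \<subseteq> vecs R n"
  shows "v \<in> lin_span R vs \<longleftrightarrow> (\<exists>c. (\<forall>k<length vs. c k \<in> carrier R) \<and> v = lincomb R c vs)"
proof
  assume "v \<in> lin_span R vs"
  then obtain cs where "set cs \<subseteq> carrier R" "length cs = length vs" "v = lincomb R (nth cs) vs"
    unfolding lin_span_def by auto
  then show "\<exists>c. (\<forall>k<length vs. c k \<in> carrier R) \<and> v = lincomb R c vs"
    by (intro exI[of _ "nth cs"]) auto
next
  assume "\<exists>c. (\<forall>k<length vs. c k \<in> carrier R) \<and> v = lincomb R c vs"
  then show "v \<in> lin_span R vs" using lincomb_in_lin_span[OF assms] by auto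
qed

lemma lin_span_subset_vecs: "set vs \<subseteq> vecs R n \<Longrightarrow> lin_span R vs \<subseteq> vecs R n"
  by (auto simp: in_lin_span_iff lincomb_vecs)

lemma finite_lin_span: "finite (lin_span R vs)"
  unfolding lin_span_def using finite_carrier by (intro finite_imageI finite_lists_length_eq)

lemma lincomb_diff:
  assumes "set vs \<subseteq> vecs R n" "\<And>k. k < length vs \<Longrightarrow> c k \<in> carrier R"
    "\<And>k. k < length vs \<Longrightarrow> c' k \<in> carrier R"
  shows "lincomb R (\<lambda>k. c k \<ominus> c' k) vs i = lincomb R c vs i \<ominus> lincomb R c' vs i"
proof -
  have "lincomb R (\<lambda>k. c k \<ominus> c' k) vs i =
     (\<Oplus>k\<in>{..<length vs}. c k \<otimes> (vs!k) i \<oplus> \<ominus> (c' k \<otimes> (vs!k) i))"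
    unfolding lincomb_def using assms
    by (intro finsum_cong) (auto simp: minus_eq l_distr l_minus)
  also have "\<dots> = lincomb R c vs i \<oplus> (\<Oplus>k\<in>{..<length vs}. \<ominus> (c' k \<otimes> (vs!k) i))"
    unfolding lincomb_def using assms by (subst finsum_addf) auto
  also have "\<dots> = lincomb R c vs i \<ominus> lincomb R c' vs i"
    unfolding lincomb_def using assms by (subst finsum_a_inv) (auto simp: minus_eq)
  finally show ?thesis .
qed

lemma lin_indepD:
  assumes "lin_indep R n vs" "\<And>k. k < length vs \<Longrightarrow> c k \<in> carrier R"
    "lincomb R c vs = zvec R" "k < length vs"
  shows "c k = \<zero>"
  using assms unfolding lin_indep_def lincomb_def by blast

lemma lincomb_coeffs_unique:
  assumes ind: "lin_indep R n vs" and vs: "set vs \<subseteq> vecs R n"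
    and c: "\<And>k. k < length vs \<Longrightarrow> c k \<in> carrier R"
    and c': "\<And>k. k < length vs \<Longrightarrow> c' k \<in> carrier R"
    and eq: "lincomb R c vs = lincomb R c' vs" and k: "k < length vs"
  shows "c k = c' k"
proof -
  have "lincomb R (\<lambda>k. c k \<ominus> c' k) vs = zvec R"
  proof
    fix i
    have "lincomb R (\<lambda>k. c k \<ominus> c' k) vs i = lincomb R c vs i \<ominus> lincomb R c' vs i"
      using vs c c' by (rule lincomb_diff)
    also have "\<dots> = \<zero>" using eq lincomb_carrier[OF vs c'] by (simp add: r_right_minus_eq)
    finally show "lincomb R (\<lambda>k. c k \<ominus> c' k) vs i = zvec R i" by (simp add: zvec_def)
  qed
  then have "c k \<ominus> c' k = \<zero>"
    using lin_indepD[OF ind, of "\<lambda>k. c k \<ominus> c' k"] k c c' by blast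
  then show ?thesis using c[OF k] c'[OF k] by (simp add: r_right_minus_eq)
qed

lemma card_lin_span:
  assumes "lin_indep R n vs" "set vs \<subseteq> vecs R n"
  shows "card (lin_span R vs) = q ^ length vs"
proof -
  let ?C = "{cs. set cs \<subseteq> carrier R \<and> length cs = length vs}"
  have "inj_on (\<lambda>cs. lincomb R (nth cs) vs) ?C"
  proof (rule inj_onI)
    fix cs cs' assume cs: "cs \<in> ?C" and cs': "cs' \<in> ?C"
      and eq: "lincomb R (nth cs) vs = lincomb R (nth cs') vs"
    have "cs ! k \<in> carrier R" "cs' ! k \<in> carrier R" if "k < length vs" for k
      using that cs cs' by auto
    then have "cs ! k = cs' ! k" if "k < length vs" for k
      using lincomb_coeffs_unique[OF assms _ _ eq that] by blast
    then show "cs = cs'" using cs cs' by (intro nth_equalityI) auto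
  qed
  then have "card (lin_span R vs) = card ?C"
    unfolding lin_span_def by (rule card_image)
  also have "\<dots> = q ^ length vs" using finite_carrier by (rule card_lists_length_eq)
  finally show ?thesis .
qed


lemma finite_tail_vecs: "finite (tail_vecs R n k)"
  and card_tail_vecs: "card (tail_vecs R n k) = q ^ (n - k)"
proof -
  let ?P = "PiE {k..<n} (\<lambda>_. carrier R)"
  let ?f = "\<lambda>v. restrict v {k..<n}"
  have outside: "v i = \<zero>" if "v \<in> tail_vecs R n k" "i \<notin> {k..<n}" for v i
    using that unfolding tail_vecs_def vecs_def by auto
  have inj: "inj_on ?f (tail_vecs R n k)"
  proof (rule inj_onI, rule ext)
    fix v w i assume v: "v \<in> tail_vecs R n k" and w: "w \<in> tail_vecs R n k" and eq: "?f v = ?f w"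
    show "v i = w i"
    proof (cases "i \<in> {k..<n}")
      case True
      then show ?thesis using fun_cong[OF eq, of i] by simp
    next
      case False
      then show ?thesis using outside[OF v] outside[OF w] by simp
    qed
  qed
  have "?f ` tail_vecs R n k = ?P"
  proof
    show "?f ` tail_vecs R n k \<subseteq> ?P" by (auto simp: tail_vecs_def vecs_def)
    show "?P \<subseteq> ?f ` tail_vecs R n k"
    proof
      fix g assume g: "g \<in> ?P"
      let ?v = "\<lambda>i. if i \<in> {k..<n} then g i else \<zero>"
      have "?f ?v = g"
      proof
        fix i show "?f ?v i = g i" using PiE_arb[OF g, of i] by (cases "i \<in> {k..<n}") simp_all
      qed
      moreover have "?v \<in> tail_vecs R n k" using g unfolding tail_vecs_def vecs_def by (auto simp: PiE_def Pi_def)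
      ultimately show "g \<in> ?f ` tail_vecs R n k" by (rule image_eqI[OF sym])
    qed
  qed
  moreover have "finite ?P" using finite_carrier by (intro finite_PiE) auto
  ultimately show "finite (tail_vecs R n k)" "card (tail_vecs R n k) = q ^ (n - k)"
    using inj finite_imageD[OF _ inj] card_image[OF inj] by (simp_all add: card_PiE)
qed

lemma tail_vecs_0: "tail_vecs R n 0 = vecs R n"
  by (simp add: tail_vecs_def)

lemma tail_vecs_zero: "v \<in> tail_vecs R n k \<Longrightarrow> \<not> (k \<le> i \<and> i < n) \<Longrightarrow> v i = \<zero>"
  by (auto simp: tail_vecs_def vecs_def)

lemma finite_vecs: "finite (vecs R n)"
  and card_vecs: "card (vecs R n) = q ^ n"
  using finite_tail_vecs[of 0] card_tail_vecs[of 0] by (simp_all add: tail_vecs_0)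

lemma lin_indep_length_le:
  assumes "lin_indep R n vs" "set vs \<subseteq> vecs R n"
  shows "length vs \<le> n"
proof -
  have "q ^ length vs = card (lin_span R vs)" using card_lin_span[OF assms] by simp
  also have "\<dots> \<le> card (vecs R n)"
    using lin_span_subset_vecs[OF assms(2)] finite_vecs by (rule card_mono[rotated])
  also have "\<dots> = q ^ n" by (rule card_vecs)
  finally show ?thesis by (rule q_power_le_imp_le)
qed

lemma lincomb_snoc:
  assumes "set vs \<subseteq> vecs R n" "v \<in> vecs R n" "\<And>k. k \<le> length vs \<Longrightarrow> c k \<in> carrier R"
  shows "lincomb R c (vs @ [v]) i = lincomb R c vs i \<oplus> c (length vs) \<otimes> v i"
proof -
  have "lincomb R c (vs @ [v]) i = (\<Oplus>k\<in>insert (length vs) {..<length vs}. c k \<otimes> ((vs @ [v]) ! k) i)"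
    unfolding lincomb_def by (simp add: lessThan_Suc)
  also have "\<dots> = c (length vs) \<otimes> v i \<oplus> (\<Oplus>k\<in>{..<length vs}. c k \<otimes> ((vs @ [v]) ! k) i)"
    using assms by (subst finsum_insert) (auto simp: nth_append vecs_carrier)
  also have "(\<Oplus>k\<in>{..<length vs}. c k \<otimes> ((vs @ [v]) ! k) i) = lincomb R c vs i"
    unfolding lincomb_def using assms by (intro finsum_cong) (auto simp: nth_append)
  finally show ?thesis using assms by (simp add: a_comm vecs_carrier)
qed

lemma lincomb_smult:
  assumes "set vs \<subseteq> vecs R n" "\<And>k. k < length vs \<Longrightarrow> c k \<in> carrier R" "a \<in> carrier R"
  shows "lincomb R (\<lambda>k. a \<otimes> c k) vs i = a \<otimes> lincomb R c vs i"
proof -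
  have "a \<otimes> lincomb R c vs i = (\<Oplus>k\<in>{..<length vs}. a \<otimes> (c k \<otimes> (vs ! k) i))"
    unfolding lincomb_def using assms by (subst finsum_rdistr) auto
  also have "\<dots> = lincomb R (\<lambda>k. a \<otimes> c k) vs i"
    unfolding lincomb_def using assms by (intro finsum_cong) (auto simp: m_assoc)
  finally show ?thesis by simp
qed

lemma in_lin_span_if_lincomb_snoc_zero:
  assumes vs: "set vs \<subseteq> vecs R n" and v: "v \<in> vecs R n"
    and c: "\<And>k. k \<le> length vs \<Longrightarrow> c k \<in> carrier R"
    and zero: "\<And>i. lincomb R c vs i \<oplus> c (length vs) \<otimes> v i = \<zero>" and a: "c (length vs) \<noteq> \<zero>"
  shows "v \<in> lin_span R vs"
proof -
  let ?a = "c (length vs)"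
  have c': "\<And>k. k < length vs \<Longrightarrow> c k \<in> carrier R" using c by auto
  have inv_a: "inv ?a \<in> carrier R" "\<ominus> (inv ?a) \<in> carrier R" "inv ?a \<otimes> ?a = \<one>"
    using a c field_Units by auto
  have "v i = (\<ominus> (inv ?a)) \<otimes> lincomb R c vs i" for i
  proof -
    have "?a \<otimes> v i = \<ominus> lincomb R c vs i"
      using zero[of i] c c' vs v by (metis a_comm lincomb_carrier m_closed order_refl sum_zero_eq_neg vecs_carrier)
    then have "inv ?a \<otimes> (?a \<otimes> v i) = inv ?a \<otimes> (\<ominus> lincomb R c vs i)" by simp
    moreover have "inv ?a \<otimes> (?a \<otimes> v i) = v i"
      using inv_a c[OF order_refl] v by (simp add: m_assoc[symmetric] vecs_carrier)
    ultimately show ?thesis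
      using inv_a c c' vs by (simp add: l_minus r_minus)
  qed
  then have "v = lincomb R (\<lambda>k. (\<ominus> (inv ?a)) \<otimes> c k) vs"
    using lincomb_smult[OF vs c' inv_a(2)] by auto
  then show ?thesis
    using inv_a c' by (simp add: lincomb_in_lin_span[OF vs])
qed

lemma lin_indep_snoc:
  assumes ind: "lin_indep R n vs" and vs: "set vs \<subseteq> vecs R n" and v: "v \<in> vecs R n"
    and notin: "v \<notin> lin_span R vs"
  shows "lin_indep R n (vs @ [v])"
  unfolding lin_indep_def
proof (rule allI, rule impI, rule impI)
  fix c
  assume "\<forall>k<length (vs @ [v]). c k \<in> carrier R"
  then have c: "\<And>k. k \<le> length vs \<Longrightarrow> c k \<in> carrier R" by auto
  then have c': "\<And>k. k < length vs \<Longrightarrow> c k \<in> carrier R" by auto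
  assume combination_zero: "(\<lambda>i. \<Oplus>k\<in>{..<length (vs @ [v])}. c k \<otimes> ((vs @ [v]) ! k) i) = zvec R"
  have zero: "lincomb R c vs i \<oplus> c (length vs) \<otimes> v i = \<zero>" for i
  proof -
    have "lincomb R c (vs @ [v]) i = \<zero>"
      using fun_cong[OF combination_zero, of i] unfolding lincomb_def zvec_def .
    then show ?thesis using lincomb_snoc[OF vs v c] by simp
  qed
  have last_zero: "c (length vs) = \<zero>"
    using in_lin_span_if_lincomb_snoc_zero[where c=c, OF vs v c zero] notin by blast
  then have "lincomb R c vs = zvec R"
    using zero c' vs v by (auto simp: zvec_def vecs_carrier)
  then show "\<forall>k<length (vs @ [v]). c k = \<zero>"
    using lin_indepD[OF ind c'] last_zero by (auto simp: nth_append less_Suc_eq)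
qed

lemma lin_subspace_subset: "lin_subspace R n W \<Longrightarrow> W \<subseteq> vecs R n"
  by (simp add: lin_subspace_def)

lemma lin_subspace_lincomb:
  "lin_subspace R n W \<Longrightarrow> set vs \<subseteq> W \<Longrightarrow> (\<And>k. k < length vs \<Longrightarrow> c k \<in> carrier R) \<Longrightarrow> lincomb R c vs \<in> W"
  unfolding lin_subspace_def by blast

lemma finite_lin_subspace: "lin_subspace R n W \<Longrightarrow> finite W"
  using lin_subspace_subset finite_vecs finite_subset by blast

lemma lin_span_subset_lin_subspace:
  assumes "lin_subspace R n W" "set vs \<subseteq> W"
  shows "lin_span R vs \<subseteq> W"
proof -
  have "set vs \<subseteq> vecs R n" using assms lin_subspace_subset by blast
  then show ?thesis
    using lin_subspace_lincomb[OF assms] by (auto simp: in_lin_span_iff)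
qed

lemma lin_subspace_tail_vecs: "lin_subspace R n (tail_vecs R n k)"
  unfolding lin_subspace_def
proof (intro conjI allI impI)
  show "tail_vecs R n k \<subseteq> vecs R n" by (auto simp: tail_vecs_def)
  fix vs c assume a: "set vs \<subseteq> tail_vecs R n k \<and> (\<forall>k<length vs. c k \<in> carrier R)"
  have vs: "set vs \<subseteq> vecs R n" using a by (auto simp: tail_vecs_def)
  have c: "\<And>j. j < length vs \<Longrightarrow> c j \<in> carrier R" using a by auto
  have "lincomb R c vs j = \<zero>" if "j < k" for j
  proof -
    have "(vs ! i) j = \<zero>" if "i < length vs" for i
    proof -
      have "vs ! i \<in> tail_vecs R n k" using a that by auto
      then show ?thesis using \<open>j < k\<close> by (simp add: tail_vecs_def)
    qed
    then have "lincomb R c vs j = (\<Oplus>i\<in>{..<length vs}. \<zero>)"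
      unfolding lincomb_def using c by (intro finsum_cong) auto
    then show ?thesis by (simp add: finsum_zero)
  qed
  then show "lincomb R c vs \<in> tail_vecs R n k" using lincomb_vecs[OF vs] c by (auto simp: tail_vecs_def)
qed

lemma lin_subspace_vecs: "lin_subspace R n (vecs R n)"
  using lin_subspace_tail_vecs[of 0] by (simp add: tail_vecs_0)

lemma lin_indep_extend_basis:
  assumes W: "lin_subspace R n W" and ind: "lin_indep R n bs" and bs: "set bs \<subseteq> W"
  obtains cs where "set cs \<subseteq> W" "lin_indep R n (bs @ cs)" "lin_span R (bs @ cs) = W"
proof -
  have Wv: "W \<subseteq> vecs R n" using W lin_subspace_subset by blast
  define P where "P k \<longleftrightarrow> (\<exists>cs. length cs = k \<and> set cs \<subseteq> W \<and> lin_indep R n (bs @ cs))" for k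
  have P0: "P 0" unfolding P_def using ind by (intro exI[of _ "[]"]) simp
  have bounded: "\<forall>k. P k \<longrightarrow> k \<le> n"
    using bs Wv lin_indep_length_le unfolding P_def by fastforce
  obtain k where "P k" and k_max: "\<forall>k'. P k' \<longrightarrow> k' \<le> k"
    using Nat.ex_has_greatest_nat[OF P0 bounded] by blast
  then obtain cs where cs: "length cs = k" "set cs \<subseteq> W" "lin_indep R n (bs @ cs)"
    unfolding P_def by blast
  have bcs: "set (bs @ cs) \<subseteq> W" using bs cs by auto
  have "W \<subseteq> lin_span R (bs @ cs)"
  proof
    fix w assume w: "w \<in> W"
    show "w \<in> lin_span R (bs @ cs)"
    proof (rule ccontr)
      assume "w \<notin> lin_span R (bs @ cs)"
      then have "lin_indep R n ((bs @ cs) @ [w])"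
        using cs(3) bcs Wv w by (intro lin_indep_snoc) auto
      then have "P (Suc k)" unfolding P_def using cs w by (intro exI[of _ "cs @ [w]"]) auto
      then show False using k_max by fastforce
    qed
  qed
  then have "lin_span R (bs @ cs) = W" using lin_span_subset_lin_subspace[OF W bcs] by blast
  then show thesis using that cs by blast
qed

lemma card_lin_subspace:
  assumes W: "lin_subspace R n W"
  shows "card W = q ^ subdim R n W"
proof -
  obtain cs where cs: "set cs \<subseteq> W" "lin_indep R n cs" "lin_span R cs = W"
    using lin_indep_extend_basis[OF W, of "[]"] by (auto simp: lin_indep_def)
  have W_card: "card W = q ^ length cs"
    using card_lin_span[OF cs(2)] cs lin_subspace_subset[OF W] by auto
  let ?S = "{k. \<exists>vs. length vs = k \<and> set vs \<subseteq> W \<and> lin_indep R n vs}"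
  have bound: "k \<le> length cs" if "k \<in> ?S" for k
  proof -
    from that obtain vs where vs: "length vs = k" "set vs \<subseteq> W" "lin_indep R n vs" by blast
    have "q ^ k = card (lin_span R vs)"
      using card_lin_span[OF vs(3)] vs lin_subspace_subset[OF W] by auto
    also have "\<dots> \<le> card W"
      using lin_span_subset_lin_subspace[OF W vs(2)] finite_lin_subspace[OF W] by (rule card_mono[rotated])
    finally show ?thesis using W_card q_power_le_imp_le by simp
  qed
  have "subdim R n W = length cs"
    unfolding subdim_def
  proof (rule Max_eqI)
    have "?S \<subseteq> {..length cs}" using bound by auto
    then show "finite ?S" by (rule finite_subset) simp
    show "\<And>y. y \<in> ?S \<Longrightarrow> y \<le> length cs" using bound by blast
    show "length cs \<in> ?S" using cs by blast
  qed
  then show ?thesis using W_card by simp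
qed

lemma lin_span_eq_if_card_eq:
  assumes W: "lin_subspace R n W" and vs: "lin_indep R n vs" "set vs \<subseteq> W"
    and card: "card W = q ^ length vs"
  shows "lin_span R vs = W"
proof -
  have "card (lin_span R vs) = card W"
    using card_lin_span[OF vs(1)] vs(2) card lin_subspace_subset[OF W] by auto
  then show ?thesis
    using lin_span_subset_lin_subspace[OF W vs(2)] finite_lin_subspace[OF W] by (metis card_subset_eq)
qed


section \<open>Matrices and differentials\<close>

lemma mats_carrier: "M \<in> mats R n \<Longrightarrow> M i j \<in> carrier R"
  unfolding mats_def by (cases "i < n \<and> j < n") auto

lemma mats_zero: "M \<in> mats R n \<Longrightarrow> \<not> (i < n \<and> j < n) \<Longrightarrow> M i j = \<zero>"
  unfolding mats_def by auto

lemma mat_vec_vecs: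
  assumes "M \<in> mats R n" "v \<in> vecs R n"
  shows "mat_vec R n M v \<in> vecs R n"
  using assms unfolding vecs_def mat_vec_def
  by (auto simp: mats_carrier vecs_carrier not_less[symmetric] intro!: finsum_closed)

lemma mat_vec_lincomb:
  assumes M: "M \<in> mats R n" and vs: "set vs \<subseteq> vecs R n"
    and c: "\<And>k. k < length vs \<Longrightarrow> c k \<in> carrier R"
  shows "mat_vec R n M (lincomb R c vs) = lincomb R c (map (mat_vec R n M) vs)"
proof
  fix i
  show "mat_vec R n M (lincomb R c vs) i = lincomb R c (map (mat_vec R n M) vs) i"
  proof (cases "i < n")
    case True
    have "mat_vec R n M (lincomb R c vs) i = (\<Oplus>j\<in>{..<n}. M i j \<otimes> (\<Oplus>k\<in>{..<length vs}. c k \<otimes> (vs ! k) j))"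
      using True by (simp add: mat_vec_def lincomb_def)
    also have "\<dots> = (\<Oplus>j\<in>{..<n}. \<Oplus>k\<in>{..<length vs}. M i j \<otimes> (c k \<otimes> (vs ! k) j))"
      using vs c by (intro finsum_cong) (auto simp: finsum_rdistr mats_carrier[OF M])
    also have "\<dots> = (\<Oplus>k\<in>{..<length vs}. \<Oplus>j\<in>{..<n}. M i j \<otimes> (c k \<otimes> (vs ! k) j))"
      using vs c by (intro finsum_swap) (auto simp: mats_carrier[OF M])
    also have "\<dots> = (\<Oplus>k\<in>{..<length vs}. c k \<otimes> (\<Oplus>j\<in>{..<n}. M i j \<otimes> (vs ! k) j))"
      using vs c by (intro finsum_cong) (auto simp: finsum_rdistr mats_carrier[OF M] m_lcomm)
    also have "\<dots> = lincomb R c (map (mat_vec R n M) vs) i"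
      unfolding lincomb_def using True vs c
      by (intro finsum_cong) (auto simp: mat_vec_def mats_carrier[OF M] intro!: finsum_closed)
    finally show ?thesis .
  next
    case False
    have "lincomb R c (map (mat_vec R n M) vs) i = (\<Oplus>k\<in>{..<length vs}. \<zero>)"
      unfolding lincomb_def using False c by (intro finsum_cong) (auto simp: mat_vec_def)
    then show ?thesis using False by (simp add: mat_vec_def finsum_zero)
  qed
qed

lemma mat_vec_add:
  assumes M: "M \<in> mats R n" and v: "v \<in> vecs R n" and w: "w \<in> vecs R n"
  shows "mat_vec R n M (\<lambda>i. v i \<oplus> w i) = (\<lambda>i. mat_vec R n M v i \<oplus> mat_vec R n M w i)"
proof
  fix i
  have "(\<Oplus>j\<in>{..<n}. M i j \<otimes> (v j \<oplus> w j)) = (\<Oplus>j\<in>{..<n}. M i j \<otimes> v j \<oplus> M i j \<otimes> w j)"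
    using M v w by (intro finsum_cong) (auto simp: mats_carrier vecs_carrier r_distr)
  then show "mat_vec R n M (\<lambda>i. v i \<oplus> w i) i = mat_vec R n M v i \<oplus> mat_vec R n M w i"
    using M v w by (simp add: mat_vec_def finsum_addf mats_carrier vecs_carrier)
qed

lemma mat_vec_diff:
  assumes M: "M \<in> mats R n" and v: "v \<in> vecs R n" and w: "w \<in> vecs R n"
  shows "mat_vec R n M (\<lambda>i. v i \<ominus> w i) = (\<lambda>i. mat_vec R n M v i \<ominus> mat_vec R n M w i)"
proof
  fix i
  have "(\<Oplus>j\<in>{..<n}. M i j \<otimes> (v j \<ominus> w j)) = (\<Oplus>j\<in>{..<n}. M i j \<otimes> v j \<oplus> \<ominus> (M i j \<otimes> w j))"
    using M v w by (intro finsum_cong) (auto simp: mats_carrier vecs_carrier minus_eq r_distr r_minus)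
  then show "mat_vec R n M (\<lambda>i. v i \<ominus> w i) i = mat_vec R n M v i \<ominus> mat_vec R n M w i"
    using M v w by (simp add: mat_vec_def finsum_addf finsum_a_inv mats_carrier vecs_carrier minus_eq)
qed

lemma mat_vec_mat_mult:
  assumes M: "M \<in> mats R n" and N: "N \<in> mats R n" and v: "v \<in> vecs R n"
  shows "mat_vec R n M (mat_vec R n N v) = mat_vec R n (mat_mult R n M N) v"
proof
  fix i
  show "mat_vec R n M (mat_vec R n N v) i = mat_vec R n (mat_mult R n M N) v i"
  proof (cases "i < n")
    case True
    have "mat_vec R n M (mat_vec R n N v) i = (\<Oplus>k\<in>{..<n}. M i k \<otimes> (\<Oplus>j\<in>{..<n}. N k j \<otimes> v j))"
      unfolding mat_vec_def using True M N v
      by (simp, intro finsum_cong) (auto simp: mats_carrier vecs_carrier intro!: finsum_closed)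
    also have "\<dots> = (\<Oplus>k\<in>{..<n}. \<Oplus>j\<in>{..<n}. M i k \<otimes> (N k j \<otimes> v j))"
      using M N v by (intro finsum_cong) (auto simp: finsum_rdistr mats_carrier vecs_carrier)
    also have "\<dots> = (\<Oplus>j\<in>{..<n}. \<Oplus>k\<in>{..<n}. M i k \<otimes> (N k j \<otimes> v j))"
      using M N v by (intro finsum_swap) (auto simp: mats_carrier vecs_carrier)
    also have "\<dots> = (\<Oplus>j\<in>{..<n}. (\<Oplus>k\<in>{..<n}. M i k \<otimes> N k j) \<otimes> v j)"
      using M N v by (intro finsum_cong) (auto simp: finsum_ldistr mats_carrier vecs_carrier m_assoc)
    also have "\<dots> = mat_vec R n (mat_mult R n M N) v i"
      unfolding mat_vec_def mat_mult_def using True M N v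
      by (simp, intro finsum_cong) (auto simp: mats_carrier vecs_carrier intro!: finsum_closed)
    finally show ?thesis .
  qed (simp add: mat_vec_def)
qed

lemma mat_vec_unit_vec:
  assumes M: "M \<in> mats R n" and ij: "i < n" "j < n"
  shows "mat_vec R n M (\<lambda>k. if k = j then \<one> else \<zero>) i = M i j"
proof -
  have "mat_vec R n M (\<lambda>k. if k = j then \<one> else \<zero>) i = (\<Oplus>k\<in>{..<n}. if j = k then M i k else \<zero>)"
  proof -
    have "M i k \<otimes> (if k = j then \<one> else \<zero>) = (if j = k then M i k else \<zero>)" for k
      using mats_carrier[OF M] by auto
    then show ?thesis unfolding mat_vec_def using ij by simp
  qed
  also have "\<dots> = M i j" using ij by (intro finsum_singleton) (auto simp: mats_carrier[OF M])
  finally show ?thesis .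
qed

lemma mats_eqI:
  assumes M: "M \<in> mats R n" and N: "N \<in> mats R n"
    and eq: "\<And>v. v \<in> vecs R n \<Longrightarrow> mat_vec R n M v = mat_vec R n N v"
  shows "M = N"
proof (intro ext)
  fix i j
  show "M i j = N i j"
  proof (cases "i < n \<and> j < n")
    case True
    then have "(\<lambda>k. if k = j then \<one> else \<zero>) \<in> vecs R n" by (auto simp: vecs_def)
    then show ?thesis using True mat_vec_unit_vec[OF M] mat_vec_unit_vec[OF N] eq by metis
  qed (simp add: mats_zero[OF M] mats_zero[OF N])
qed

lemma mats_eqI_on_spanning_list:
  assumes M: "M \<in> mats R n" and N: "N \<in> mats R n"
    and bs: "set bs \<subseteq> vecs R n" "lin_span R bs = vecs R n"
    and eq: "map (mat_vec R n M) bs = map (mat_vec R n N) bs"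
  shows "M = N"
proof (rule mats_eqI[OF M N])
  fix v assume "v \<in> vecs R n"
  then obtain c where c: "\<And>k. k < length bs \<Longrightarrow> c k \<in> carrier R" "v = lincomb R c bs"
    using bs in_lin_span_iff by blast
  have "mat_vec R n M v = lincomb R c (map (mat_vec R n M) bs)"
    using mat_vec_lincomb[OF M bs(1) c(1)] c(2) by (simp only:)
  also have "\<dots> = lincomb R c (map (mat_vec R n N) bs)" by (simp only: eq)
  also have "\<dots> = mat_vec R n N v"
    using mat_vec_lincomb[OF N bs(1) c(1)] c(2) by (simp only:)
  finally show "mat_vec R n M v = mat_vec R n N v" .
qed

lemma finite_mats: "finite (mats R n)"
proof -
  let ?g = "\<lambda>f. \<lambda>i j. if i < n \<and> j < n then f (i, j) else \<zero>"
  have "mats R n \<subseteq> ?g ` (PiE ({..<n} \<times> {..<n}) (\<lambda>_. carrier R))"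
  proof
    fix M assume M: "M \<in> mats R n"
    let ?f = "restrict (\<lambda>(i, j). M i j) ({..<n} \<times> {..<n})"
    have "?f \<in> PiE ({..<n} \<times> {..<n}) (\<lambda>_. carrier R)" using M by (auto simp: mats_carrier)
    moreover have "M = ?g ?f" using mats_zero[OF M] by (intro ext) auto
    ultimately show "M \<in> ?g ` (PiE ({..<n} \<times> {..<n}) (\<lambda>_. carrier R))" by blast
  qed
  moreover have "finite (PiE ({..<n} \<times> {..<n}) (\<lambda>_. carrier R))"
    using finite_carrier by (intro finite_PiE) auto
  ultimately show ?thesis by (rule finite_subset[OF _ finite_imageI])
qed

end

definition mat_rank :: "('a, 'b) ring_scheme \<Rightarrow> nat \<Rightarrow> (nat \<Rightarrow> nat \<Rightarrow> 'a) \<Rightarrow> nat" where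
  "mat_rank R n M = subdim R n (im_d R n M)"

context finite_field_space
begin

lemma lin_subspace_ker_d:
  assumes M: "M \<in> mats R n"
  shows "lin_subspace R n (ker_d R n M)"
  unfolding lin_subspace_def
proof (intro conjI allI impI)
  show "ker_d R n M \<subseteq> vecs R n" by (auto simp: ker_d_def)
  fix vs c assume a: "set vs \<subseteq> ker_d R n M \<and> (\<forall>k<length vs. c k \<in> carrier R)"
  have vs: "set vs \<subseteq> vecs R n" using a by (auto simp: ker_d_def)
  have c: "\<And>k. k < length vs \<Longrightarrow> c k \<in> carrier R" using a by auto
  have zero: "mat_vec R n M (vs ! k) = zvec R" if "k < length vs" for k
  proof -
    have "vs ! k \<in> ker_d R n M" using a that by auto
    then show ?thesis by (simp add: ker_d_def)
  qed
  have "lincomb R c (map (mat_vec R n M) vs) i = (\<Oplus>k\<in>{..<length vs}. \<zero>)" for i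
    unfolding lincomb_def using zero c by (intro finsum_cong) (auto simp: zvec_def)
  then have "mat_vec R n M (lincomb R c vs) = zvec R"
    using mat_vec_lincomb[OF M vs c] by (auto simp: zvec_def finsum_zero)
  then show "lincomb R c vs \<in> ker_d R n M" using lincomb_vecs[OF vs c] by (simp add: ker_d_def)
qed

lemma lin_subspace_im_d:
  assumes M: "M \<in> mats R n"
  shows "lin_subspace R n (im_d R n M)"
  unfolding lin_subspace_def
proof (intro conjI allI impI)
  show "im_d R n M \<subseteq> vecs R n" using mat_vec_vecs[OF M] by (auto simp: im_d_def)
  fix vs c assume a: "set vs \<subseteq> im_d R n M \<and> (\<forall>k<length vs. c k \<in> carrier R)"
  then have "vs \<in> lists (mat_vec R n M ` vecs R n)" by (auto simp: im_d_def)
  then obtain us where us: "set us \<subseteq> vecs R n" "vs = map (mat_vec R n M) us"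
    unfolding lists_image by blast
  have c: "\<And>k. k < length us \<Longrightarrow> c k \<in> carrier R" using a us by auto
  have "lincomb R c vs = mat_vec R n M (lincomb R c us)"
    using mat_vec_lincomb[OF M us(1) c] us(2) by simp
  then show "lincomb R c vs \<in> im_d R n M" using lincomb_vecs[OF us(1) c] by (simp add: im_d_def)
qed

text \<open>Every fibre of M is a translate of its kernel.\<close>
lemma card_mat_vec_fibre:
  assumes M: "M \<in> mats R n" and w: "w \<in> im_d R n M"
  shows "card {v \<in> vecs R n. mat_vec R n M v = w} = card (ker_d R n M)"
proof -
  obtain v0 where v0: "v0 \<in> vecs R n" "mat_vec R n M v0 = w" using w unfolding im_d_def by auto
  have wv: "w \<in> vecs R n" using v0 mat_vec_vecs[OF M] by blast
  define h where "h z = (\<lambda>i. v0 i \<oplus> z i)" for z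
  have "inj_on h (ker_d R n M)"
  proof (rule inj_onI, rule ext)
    fix z z' i assume "z \<in> ker_d R n M" "z' \<in> ker_d R n M" and eq: "h z = h z'"
    then have "z i \<in> carrier R" "z' i \<in> carrier R" by (auto simp: ker_d_def vecs_carrier)
    moreover have "v0 i \<oplus> z i = v0 i \<oplus> z' i" using fun_cong[OF eq, of i] by (simp add: h_def)
    ultimately show "z i = z' i" using vecs_carrier[OF v0(1)] by (metis add.m_lcomm r_neg1)
  qed
  moreover have "h ` ker_d R n M = {v \<in> vecs R n. mat_vec R n M v = w}"
  proof (intro equalityI subsetI)
    fix x assume "x \<in> h ` ker_d R n M"
    then obtain z where z: "z \<in> vecs R n" "mat_vec R n M z = zvec R" "x = h z"
      by (auto simp: ker_d_def)
    have "mat_vec R n M x = (\<lambda>i. w i \<oplus> \<zero>)"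
      using mat_vec_add[OF M v0(1) z(1)] z v0(2) by (simp add: h_def zvec_def)
    moreover have "x \<in> vecs R n" using z(1,3) v0(1) by (auto simp: h_def vecs_def)
    ultimately show "x \<in> {v \<in> vecs R n. mat_vec R n M v = w}" using wv by (auto simp: vecs_carrier)
  next
    fix v assume v: "v \<in> {v \<in> vecs R n. mat_vec R n M v = w}"
    let ?z = "\<lambda>i. v i \<ominus> v0 i"
    have z: "?z \<in> vecs R n" using v v0(1) by (auto simp: vecs_def minus_eq)
    have "mat_vec R n M ?z = (\<lambda>i. w i \<ominus> w i)"
      using mat_vec_diff[OF M _ v0(1)] v v0(2) by simp
    then have "?z \<in> ker_d R n M" using z wv by (auto simp: ker_d_def zvec_def vecs_carrier)
    moreover have "h ?z = v"
    proof
      fix i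
      have "v i \<in> carrier R" "v0 i \<in> carrier R" using v v0(1) by (auto simp: vecs_carrier)
      then show "h ?z i = v i" unfolding h_def by algebra
    qed
    ultimately show "v \<in> h ` ker_d R n M" by (metis imageI)
  qed
  ultimately show ?thesis by (metis card_image)
qed

lemma card_im_d_mult_card_ker_d:
  assumes M: "M \<in> mats R n"
  shows "card (im_d R n M) * card (ker_d R n M) = q ^ n"
proof -
  let ?F = "\<lambda>w. {v \<in> vecs R n. mat_vec R n M v = w}"
  have "vecs R n = (\<Union>w\<in>im_d R n M. ?F w)" unfolding im_d_def by auto
  then have "q ^ n = card (\<Union>w\<in>im_d R n M. ?F w)" using card_vecs by simp
  also have "\<dots> = (\<Sum>w\<in>im_d R n M. card (?F w))"
    using finite_vecs by (intro card_UN_disjoint) (auto simp: im_d_def)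
  also have "\<dots> = card (im_d R n M) * card (ker_d R n M)"
    using card_mat_vec_fibre[OF M] by simp
  finally show ?thesis by simp
qed

lemma finite_differentials: "finite (differentials R n)"
  using finite_mats by (rule finite_subset[rotated]) (auto simp: differentials_def)

lemma card_differentials_pos: "card (differentials R n) > 0"
proof -
  have "(\<lambda>i j. \<zero>) \<in> differentials R n"
    unfolding differentials_def mats_def mat_mult_def by (auto intro!: ext simp: finsum_zero)
  then show ?thesis using finite_differentials by (auto simp: card_gt_0_iff)
qed

lemma differentials_mats: "M \<in> differentials R n \<Longrightarrow> M \<in> mats R n"
  by (simp add: differentials_def)

lemma im_d_subset_ker_d:
  assumes D: "M \<in> differentials R n"
  shows "im_d R n M \<subseteq> ker_d R n M"
proof
  have M: "M \<in> mats R n" using D by (rule differentials_mats)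
  fix w assume "w \<in> im_d R n M"
  then obtain v where v: "v \<in> vecs R n" "w = mat_vec R n M v" by (auto simp: im_d_def)
  have "mat_vec R n M w = mat_vec R n (\<lambda>i j. \<zero>) v"
    using v mat_vec_mat_mult[OF M M v(1)] D by (simp add: differentials_def)
  also have "\<dots> = zvec R" using v by (intro ext) (simp add: mat_vec_def zvec_def vecs_carrier)
  finally show "w \<in> ker_d R n M" using v mat_vec_vecs[OF M] by (simp add: ker_d_def)
qed

lemma card_im_d: "M \<in> mats R n \<Longrightarrow> card (im_d R n M) = q ^ mat_rank R n M"
  unfolding mat_rank_def by (intro card_lin_subspace lin_subspace_im_d)

lemma differential_rank_le: "M \<in> differentials R n \<Longrightarrow> 2 * mat_rank R n M \<le> n"
  and homology_dim_differential: "M \<in> differentials R n \<Longrightarrow> homology_dim R n M = n - 2 * mat_rank R n M"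
proof -
  assume D: "M \<in> differentials R n"
  then have M: "M \<in> mats R n" by (rule differentials_mats)
  let ?k = "subdim R n (ker_d R n M)"
  have ker: "card (ker_d R n M) = q ^ ?k" by (rule card_lin_subspace[OF lin_subspace_ker_d[OF M]])
  have "q ^ (mat_rank R n M + ?k) = q ^ n"
    using card_im_d_mult_card_ker_d[OF M] card_im_d[OF M] ker by (simp add: power_add)
  then have sum: "mat_rank R n M + ?k = n" by (rule q_power_inject)
  have "card (im_d R n M) \<le> card (ker_d R n M)"
    using im_d_subset_ker_d[OF D] finite_lin_subspace[OF lin_subspace_ker_d[OF M]] by (rule card_mono[rotated])
  then have "mat_rank R n M \<le> ?k" using card_im_d[OF M] ker q_power_le_imp_le by simp
  then show "2 * mat_rank R n M \<le> n" "homology_dim R n M = n - 2 * mat_rank R n M"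
    using sum unfolding homology_dim_def mat_rank_def by simp_all
qed

end

section \<open>Few differentials of small rank\<close>

definition indep_lists :: "('a, 'b) ring_scheme \<Rightarrow> nat \<Rightarrow> (nat \<Rightarrow> 'a) set \<Rightarrow> nat \<Rightarrow> (nat \<Rightarrow> 'a) list set" where
  "indep_lists R n W j = {vs. length vs = j \<and> set vs \<subseteq> W \<and> lin_indep R n vs}"

definition mats_into_span_killing :: "('a, 'b) ring_scheme \<Rightarrow> nat \<Rightarrow> (nat \<Rightarrow> 'a) list \<Rightarrow> (nat \<Rightarrow> nat \<Rightarrow> 'a) set" where
  "mats_into_span_killing R n bs = {M \<in> mats R n. mat_vec R n M ` vecs R n \<subseteq> lin_span R bs \<and>
     (\<forall>u\<in>set bs. mat_vec R n M u = zvec R)}"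

context finite_field_space
begin

lemma finite_indep_lists: "W \<subseteq> vecs R n \<Longrightarrow> finite (indep_lists R n W j)"
proof -
  assume "W \<subseteq> vecs R n"
  then have "finite W" using finite_vecs finite_subset by blast
  then have "finite {vs. set vs \<subseteq> W \<and> length vs = j}" by (rule finite_lists_length_eq)
  then show ?thesis by (rule finite_subset[rotated]) (auto simp: indep_lists_def)
qed

lemma card_indep_lists_le: "W \<subseteq> vecs R n \<Longrightarrow> card (indep_lists R n W j) \<le> card W ^ j"
proof -
  assume W: "W \<subseteq> vecs R n"
  then have "finite W" using finite_vecs finite_subset by blast
  then have "card (indep_lists R n W j) \<le> card {vs. set vs \<subseteq> W \<and> length vs = j}"
    by (intro card_mono finite_lists_length_eq) (auto simp: indep_lists_def)
  also have "\<dots> = card W ^ j" using \<open>finite W\<close> by (rule card_lists_length_eq)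
  finally show ?thesis .
qed

lemma card_diff_lin_span_ge:
  assumes W: "lin_subspace R n W" "card W = q ^ m"
    and vs: "set vs \<subseteq> W" "lin_indep R n vs" "length vs < m"
  shows "real q ^ m / 2 \<le> real (card (W - lin_span R vs))"
proof -
  have span: "lin_span R vs \<subseteq> W" by (rule lin_span_subset_lin_subspace[OF W(1) vs(1)])
  have "2 * q ^ length vs \<le> q ^ Suc (length vs)" using card_carrier_ge_2 by simp
  also have "\<dots> \<le> q ^ m" using vs(3) card_carrier_ge_2 by (intro power_increasing) auto
  finally have le: "2 * q ^ length vs \<le> q ^ m" .
  then have "real (2 * q ^ length vs) \<le> real (q ^ m)" by (simp only: of_nat_le_iff)
  then have "2 * real q ^ length vs \<le> real q ^ m" by simp
  moreover have "real (q ^ m - q ^ length vs) = real q ^ m - real q ^ length vs"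
    using le by (simp add: of_nat_diff)
  moreover have "card (W - lin_span R vs) = q ^ m - q ^ length vs"
    using card_Diff_subset[OF finite_lin_span span] card_lin_span[OF vs(2)] vs(1) W
    by (auto dest: lin_subspace_subset)
  ultimately show ?thesis by simp
qed

lemma card_indep_lists_ge:
  assumes W: "lin_subspace R n W" "card W = q ^ m" and "j \<le> m"
  shows "(real q ^ m / 2) ^ j \<le> real (card (indep_lists R n W j))"
  using \<open>j \<le> m\<close>
proof (induction j)
  case 0
  have "indep_lists R n W 0 = {[]}" by (auto simp: indep_lists_def lin_indep_def)
  then show ?case by simp
next
  case (Suc j)
  have Wv: "W \<subseteq> vecs R n" using W(1) lin_subspace_subset by blast
  let ?S = "SIGMA vs:indep_lists R n W j. W - lin_span R vs"
  have extend: "(\<lambda>(vs, v). vs @ [v]) ` ?S \<subseteq> indep_lists R n W (Suc j)"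
    using Wv by (auto simp: indep_lists_def intro!: lin_indep_snoc)
  have "inj_on (\<lambda>(vs, v). vs @ [v]) ?S" by (rule inj_onI) auto
  then have card_S: "card ?S \<le> card (indep_lists R n W (Suc j))"
    using card_mono[OF finite_indep_lists[OF Wv] extend] by (simp add: card_image)
  have "real q ^ m / 2 \<le> real (card (W - lin_span R vs))" if "vs \<in> indep_lists R n W j" for vs
    using that Suc.prems by (intro card_diff_lin_span_ge[OF W]) (auto simp: indep_lists_def)
  then have "real (card (indep_lists R n W j)) * (real q ^ m / 2)
      \<le> (\<Sum>vs\<in>indep_lists R n W j. real (card (W - lin_span R vs)))"
    using sum_bounded_below[of "indep_lists R n W j" "real q ^ m / 2"] by (simp add: mult.commute)
  also have "\<dots> = real (card ?S)"
    using finite_indep_lists[OF Wv] finite_lin_subspace[OF W(1)] by (subst card_SigmaI) auto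
  also have "\<dots> \<le> real (card (indep_lists R n W (Suc j)))" using card_S by simp
  finally have step: "real (card (indep_lists R n W j)) * (real q ^ m / 2)
      \<le> real (card (indep_lists R n W (Suc j)))" .
  have "(real q ^ m / 2) ^ Suc j = (real q ^ m / 2) ^ j * (real q ^ m / 2)" by simp
  also have "\<dots> \<le> real (card (indep_lists R n W j)) * (real q ^ m / 2)"
    using Suc by (intro mult_right_mono) auto
  also note step
  finally show ?case .
qed

text \<open>Such a map is determined by its values on a complement of bs, which lie in the span of bs.\<close>
lemma card_mats_into_span_killing:
  assumes ind: "lin_indep R n bs" and bs: "set bs \<subseteq> vecs R n"
  shows "card (mats_into_span_killing R n bs) \<le> q ^ (length bs * (n - length bs))"
proof -
  obtain cs where cs: "set cs \<subseteq> vecs R n" "lin_indep R n (bs @ cs)" "lin_span R (bs @ cs) = vecs R n"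
    using lin_indep_extend_basis[OF lin_subspace_vecs ind bs] by blast
  have bcs: "set (bs @ cs) \<subseteq> vecs R n" using bs cs by auto
  have "q ^ (length bs + length cs) = q ^ n"
    using card_lin_span[OF cs(2) bcs] cs(3) card_vecs by simp
  then have "length bs + length cs = n" by (rule q_power_inject)
  then have len: "length cs = n - length bs" by simp
  let ?P = "\<lambda>M. map (mat_vec R n M) cs"
  have "mat_vec R n M x \<in> lin_span R bs" if "M \<in> mats_into_span_killing R n bs" "x \<in> set cs" for M x
    using that cs(1) unfolding mats_into_span_killing_def by blast
  then have image: "?P ` mats_into_span_killing R n bs \<subseteq> {xs. set xs \<subseteq> lin_span R bs \<and> length xs = length cs}"
    by auto
  have "inj_on ?P (mats_into_span_killing R n bs)"
  proof (rule inj_onI)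
    fix M N assume "M \<in> mats_into_span_killing R n bs" "N \<in> mats_into_span_killing R n bs" "?P M = ?P N"
    then show "M = N"
      using cs(3) bcs by (intro mats_eqI_on_spanning_list[where bs="bs @ cs"]) (auto simp: mats_into_span_killing_def)
  qed
  then have "card (mats_into_span_killing R n bs) = card (?P ` mats_into_span_killing R n bs)"
    by (simp add: card_image)
  also have "\<dots> \<le> card {xs. set xs \<subseteq> lin_span R bs \<and> length xs = length cs}"
    using image finite_lists_length_eq[OF finite_lin_span] by (rule card_mono[rotated])
  also have "\<dots> = card (lin_span R bs) ^ length cs"
    using finite_lin_span by (rule card_lists_length_eq)
  finally show ?thesis
    using card_lin_span[OF ind bs] len by (simp add: power_mult)
qed

lemma differential_in_mats_into_span_killing:
  assumes D: "M \<in> differentials R n" and bs: "bs \<in> indep_lists R n (im_d R n M) (mat_rank R n M)"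
  shows "M \<in> mats_into_span_killing R n bs"
proof -
  have M: "M \<in> mats R n" using D by (rule differentials_mats)
  have bs': "length bs = mat_rank R n M" "set bs \<subseteq> im_d R n M" "lin_indep R n bs"
    using bs by (auto simp: indep_lists_def)
  have "lin_span R bs = im_d R n M"
    using lin_span_eq_if_card_eq[OF lin_subspace_im_d[OF M] bs'(3) bs'(2)] card_im_d[OF M] bs'(1) by simp
  moreover have "mat_vec R n M u = zvec R" if "u \<in> set bs" for u
    using that bs'(2) im_d_subset_ker_d[OF D] by (auto simp: ker_d_def)
  ultimately show ?thesis using M by (auto simp: mats_into_span_killing_def im_d_def)
qed

end

definition based_differentials :: "('a, 'b) ring_scheme \<Rightarrow> nat \<Rightarrow> nat \<Rightarrow> ((nat \<Rightarrow> nat \<Rightarrow> 'a) \<times> (nat \<Rightarrow> 'a) list) set" where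
  "based_differentials R n m =
     (SIGMA M:{M \<in> differentials R n. mat_rank R n M = m}. indep_lists R n (im_d R n M) m)"

context finite_field_space
begin

lemma card_based_differentials_ge:
  "real (card {M \<in> differentials R n. mat_rank R n M = m}) * (real q ^ m / 2) ^ m
     \<le> real (card (based_differentials R n m))"
proof -
  let ?D = "{M \<in> differentials R n. mat_rank R n M = m}"
  have im: "lin_subspace R n (im_d R n M)" "card (im_d R n M) = q ^ m" if "M \<in> ?D" for M
    using that lin_subspace_im_d card_im_d differentials_mats by auto
  have "real (card ?D) * (real q ^ m / 2) ^ m \<le> (\<Sum>M\<in>?D. real (card (indep_lists R n (im_d R n M) m)))"
    using sum_bounded_below[of ?D "(real q ^ m / 2) ^ m"] card_indep_lists_ge[OF im] by (simp add: mult.commute)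
  also have "\<dots> = real (card (based_differentials R n m))"
    unfolding based_differentials_def using finite_differentials
    by (subst card_SigmaI) (auto intro!: finite_indep_lists lin_subspace_subset lin_subspace_im_d differentials_mats)
  finally show ?thesis .
qed

lemma card_based_differentials_le:
  "card (based_differentials R n m) \<le> q ^ (n * m) * q ^ (m * (n - m))"
proof -
  let ?T = "SIGMA bs:indep_lists R n (vecs R n) m. mats_into_span_killing R n bs"
  have fin: "finite (indep_lists R n (vecs R n) m)" "finite (mats_into_span_killing R n bs)" for bs
    using finite_indep_lists[of "vecs R n"] finite_subset[OF _ finite_mats]
    by (auto simp: mats_into_span_killing_def)
  have "(\<lambda>(M, bs). (bs, M)) ` based_differentials R n m \<subseteq> ?T"
    using differential_in_mats_into_span_killing
    by (auto simp: based_differentials_def indep_lists_def im_d_def mat_vec_vecs differentials_mats)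
  moreover have "inj_on (\<lambda>(M, bs). (bs, M)) (based_differentials R n m)" by (rule inj_onI) auto
  ultimately have "card (based_differentials R n m) \<le> card ?T"
    using card_mono[of ?T] fin by (auto simp: card_image[symmetric])
  also have "\<dots> = (\<Sum>bs\<in>indep_lists R n (vecs R n) m. card (mats_into_span_killing R n bs))"
    using fin by (intro card_SigmaI) auto
  also have "\<dots> \<le> card (indep_lists R n (vecs R n) m) * q ^ (m * (n - m))"
  proof -
    have "card (mats_into_span_killing R n bs) \<le> q ^ (m * (n - m))" if "bs \<in> indep_lists R n (vecs R n) m" for bs
      using that card_mats_into_span_killing by (auto simp: indep_lists_def)
    then show ?thesis using sum_bounded_above[of "indep_lists R n (vecs R n) m"] by (metis of_nat_id)
  qed
  also have "\<dots> \<le> q ^ (n * m) * q ^ (m * (n - m))"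
    using card_indep_lists_le[of "vecs R n" m] by (simp add: card_vecs power_mult)
  finally show ?thesis .
qed

lemma card_rank_differentials_le:
  assumes "m \<le> n"
  shows "real (card {M \<in> differentials R n. mat_rank R n M = m}) \<le> 2 ^ m * real q ^ (2 * m * (n - m))"
proof -
  let ?d = "real (card {M \<in> differentials R n. mat_rank R n M = m})"
  let ?A = "real q ^ (m * m)" and ?B = "real q ^ (2 * m * (n - m))"
  obtain d where "n = m + d" using assms le_Suc_ex by blast
  then have "n * m + m * (n - m) = m * m + 2 * m * (n - m)" by (simp add: algebra_simps)
  then have "card (based_differentials R n m) \<le> q ^ (m * m) * q ^ (2 * m * (n - m))"
    using card_based_differentials_le[of m] by (simp only: power_add[symmetric])
  then have "real (card (based_differentials R n m)) \<le> real (q ^ (m * m) * q ^ (2 * m * (n - m)))"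
    by (simp only: of_nat_le_iff)
  then have "?d * (?A / 2 ^ m) \<le> ?A * ?B"
    using card_based_differentials_ge[of m] by (simp add: power_divide power_mult)
  then have "?d * ?A \<le> (2 ^ m * ?B) * ?A" by (simp add: field_simps)
  moreover have "?A > 0" using card_carrier_ge_2 by simp
  ultimately show ?thesis by simp
qed

end

section \<open>Many differentials of maximal rank\<close>

text \<open>For k-tuples ys, ws of vectors supported on the last n - k coordinates, let
  u_a = e_a + y_a (a < k) and let r_a agree with w_a on the last n - k coordinates and
  have entry -<w_a, y_j> at j < k. Then <r_a, u_b> = 0, so d = sum_a u_a r_a^T squares to zero;
  ys and ws can be read off from d when ws is independent.\<close>
definition graph_col :: "('a, 'b) ring_scheme \<Rightarrow> nat \<Rightarrow> (nat \<Rightarrow> 'a) list \<Rightarrow> nat \<Rightarrow> nat \<Rightarrow> 'a" where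
  "graph_col R k ys i a = (if i < k then (if i = a then \<one>\<^bsub>R\<^esub> else \<zero>\<^bsub>R\<^esub>) else (ys ! a) i)"

definition graph_row ::
  "('a, 'b) ring_scheme \<Rightarrow> nat \<Rightarrow> nat \<Rightarrow> (nat \<Rightarrow> 'a) list \<Rightarrow> (nat \<Rightarrow> 'a) list \<Rightarrow> nat \<Rightarrow> nat \<Rightarrow> 'a" where
  "graph_row R n k ys ws a j = (if k \<le> j then (ws ! a) j
     else \<ominus>\<^bsub>R\<^esub> (finsum R (\<lambda>c. (ws ! a) c \<otimes>\<^bsub>R\<^esub> (ys ! j) c) {k..<n}))"

definition graph_differential ::
  "('a, 'b) ring_scheme \<Rightarrow> nat \<Rightarrow> nat \<Rightarrow> (nat \<Rightarrow> 'a) list \<Rightarrow> (nat \<Rightarrow> 'a) list \<Rightarrow> nat \<Rightarrow> nat \<Rightarrow> 'a" where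
  "graph_differential R n k ys ws = (\<lambda>i j. if i < n \<and> j < n
     then finsum R (\<lambda>a. graph_col R k ys i a \<otimes>\<^bsub>R\<^esub> graph_row R n k ys ws a j) {..<k} else \<zero>\<^bsub>R\<^esub>)"

locale graph_differential_data = finite_field_space +
  fixes k :: nat and ys ws :: "(nat \<Rightarrow> 'a) list"
  assumes k_le_n: "k \<le> n"
    and ys: "length ys = k" "set ys \<subseteq> tail_vecs R n k"
    and ws: "length ws = k" "set ws \<subseteq> tail_vecs R n k"
begin

abbreviation d where "d \<equiv> graph_differential R n k ys ws"

lemma ys_tail_vecs: "a < k \<Longrightarrow> ys ! a \<in> tail_vecs R n k"
  and ws_tail_vecs: "a < k \<Longrightarrow> ws ! a \<in> tail_vecs R n k"
  using ys ws nth_mem by auto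

lemma ys_carrier [simp]: "a < k \<Longrightarrow> (ys ! a) i \<in> carrier R"
  and ws_carrier [simp]: "a < k \<Longrightarrow> (ws ! a) i \<in> carrier R"
  using ys_tail_vecs ws_tail_vecs by (auto simp: tail_vecs_def vecs_carrier)

lemma graph_col_carrier [simp]: "a < k \<Longrightarrow> graph_col R k ys i a \<in> carrier R"
  by (simp add: graph_col_def)

lemma graph_row_carrier [simp]: "a < k \<Longrightarrow> graph_row R n k ys ws a j \<in> carrier R"
  by (auto simp: graph_row_def intro!: finsum_closed)

lemma graph_row_col_orthogonal:
  assumes a: "a < k" and b: "b < k"
  shows "(\<Oplus>l\<in>{..<n}. graph_row R n k ys ws a l \<otimes> graph_col R k ys l b) = \<zero>"
proof -
  let ?T = "\<Oplus>c\<in>{k..<n}. (ws ! a) c \<otimes> (ys ! b) c"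
  have "graph_row R n k ys ws a l \<otimes> graph_col R k ys l b = (if b = l then graph_row R n k ys ws a l else \<zero>)"
    if "l < k" for l
    using a that by (auto simp: graph_col_def)
  then have "(\<Oplus>l\<in>{..<k}. graph_row R n k ys ws a l \<otimes> graph_col R k ys l b)
      = (\<Oplus>l\<in>{..<k}. if b = l then graph_row R n k ys ws a l else \<zero>)"
    using a by (intro finsum_cong) auto
  also have "\<dots> = \<ominus> ?T" using a b by (subst finsum_singleton) (auto simp: graph_row_def)
  finally have low: "(\<Oplus>l\<in>{..<k}. graph_row R n k ys ws a l \<otimes> graph_col R k ys l b) = \<ominus> ?T" .
  have high: "(\<Oplus>l\<in>{k..<n}. graph_row R n k ys ws a l \<otimes> graph_col R k ys l b) = ?T"
    using a b by (intro finsum_cong) (auto simp: graph_col_def graph_row_def)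
  have split: "{..<n} = {..<k} \<union> {k..<n}" using k_le_n by auto
  have "(\<Oplus>l\<in>{..<n}. graph_row R n k ys ws a l \<otimes> graph_col R k ys l b)
      = (\<Oplus>l\<in>{..<k}. graph_row R n k ys ws a l \<otimes> graph_col R k ys l b)
        \<oplus> (\<Oplus>l\<in>{k..<n}. graph_row R n k ys ws a l \<otimes> graph_col R k ys l b)"
    unfolding split using a b by (intro finsum_Un_disjoint) auto
  also have "\<dots> = \<ominus> ?T \<oplus> ?T" using low high by simp
  also have "\<dots> = \<zero>" using a b by (simp add: l_neg finsum_closed)
  finally show ?thesis .
qed

lemma graph_differential_in_differentials: "d \<in> differentials R n"
proof -
  have d: "d \<in> mats R n"
    unfolding mats_def graph_differential_def by (auto intro!: finsum_closed)
  have "mat_mult R n d d i j = \<zero>" for i j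
  proof (cases "i < n \<and> j < n")
    case True
    have "mat_mult R n d d i j = (\<Oplus>l\<in>{..<n}. (\<Oplus>a\<in>{..<k}. graph_col R k ys i a \<otimes> graph_row R n k ys ws a l)
        \<otimes> (\<Oplus>b\<in>{..<k}. graph_col R k ys l b \<otimes> graph_row R n k ys ws b j))"
      unfolding mat_mult_def graph_differential_def using True by (simp, intro finsum_cong) auto
    also have "\<dots> = \<zero>"
      by (rule finsum_triple_product_zero) (auto simp: graph_row_col_orthogonal)
    finally show ?thesis .
  qed (auto simp: mat_mult_def)
  then show ?thesis using d by (auto simp: differentials_def)
qed

lemma graph_differential_top:
  assumes "i < k" "j < n"
  shows "d i j = graph_row R n k ys ws i j"
proof -
  have "graph_col R k ys i a \<otimes> graph_row R n k ys ws a j = (if i = a then graph_row R n k ys ws a j else \<zero>)"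
    if "a < k" for a
    using assms that by (auto simp: graph_col_def)
  then have "d i j = (\<Oplus>a\<in>{..<k}. if i = a then graph_row R n k ys ws a j else \<zero>)"
    unfolding graph_differential_def using assms k_le_n by (simp, intro finsum_cong) auto
  also have "\<dots> = graph_row R n k ys ws i j" using assms by (subst finsum_singleton) auto
  finally show ?thesis .
qed

lemma ws_eq_graph_differential_rows:
  "a < k \<Longrightarrow> ws ! a = (\<lambda>j. if k \<le> j \<and> j < n then d a j else \<zero>)"
  using ws_tail_vecs graph_differential_top
  by (intro ext) (auto simp: graph_row_def tail_vecs_def vecs_def)

lemma graph_differential_lower_rows:
  assumes "k \<le> i" "i < n"
  shows "(\<lambda>j. if k \<le> j \<and> j < n then d i j else \<zero>) = lincomb R (\<lambda>a. (ys ! a) i) ws"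
proof
  fix j
  show "(if k \<le> j \<and> j < n then d i j else \<zero>) = lincomb R (\<lambda>a. (ys ! a) i) ws j"
  proof (cases "k \<le> j \<and> j < n")
    case True
    then show ?thesis
      unfolding graph_differential_def lincomb_def using assms ws(1)
      by (simp, intro finsum_cong) (auto simp: graph_col_def graph_row_def)
  next
    case False
    then have "(ws ! a) j = \<zero>" if "a < k" for a
      using ws_tail_vecs[OF that] by (auto simp: tail_vecs_def vecs_def)
    then have "lincomb R (\<lambda>a. (ys ! a) i) ws j = (\<Oplus>a\<in>{..<k}. \<zero>)"
      unfolding lincomb_def using ws(1) by (intro finsum_cong) auto
    then show ?thesis using False by (auto simp: finsum_zero)
  qed
qed

end

context finite_field_space
begin

lemma graph_differential_inj:
  assumes A: "graph_differential_data R n k ys ws" and B: "graph_differential_data R n k ys' ws'"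
    and ind: "lin_indep R n ws"
    and eq: "graph_differential R n k ys ws = graph_differential R n k ys' ws'"
  shows "ys = ys' \<and> ws = ws'"
proof -
  interpret A: graph_differential_data R n k ys ws by (rule A)
  interpret B: graph_differential_data R n k ys' ws' by (rule B)
  have ws_eq: "ws = ws'"
    using A.ws(1) B.ws(1) A.ws_eq_graph_differential_rows B.ws_eq_graph_differential_rows eq
    by (intro nth_equalityI) auto
  have "(ys ! a) i = (ys' ! a) i" if a: "a < k" for a i
  proof (cases "k \<le> i \<and> i < n")
    case True
    have "lincomb R (\<lambda>b. (ys ! b) i) ws = (\<lambda>j. if k \<le> j \<and> j < n then A.d i j else \<zero>)"
      using A.graph_differential_lower_rows True by simp
    also have "\<dots> = (\<lambda>j. if k \<le> j \<and> j < n then B.d i j else \<zero>)" by (simp only: eq)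
    also have "\<dots> = lincomb R (\<lambda>b. (ys' ! b) i) ws"
      using B.graph_differential_lower_rows True ws_eq by simp
    finally have "lincomb R (\<lambda>b. (ys ! b) i) ws = lincomb R (\<lambda>b. (ys' ! b) i) ws" .
    moreover have "set ws \<subseteq> vecs R n" using A.ws(2) by (auto simp: tail_vecs_def)
    ultimately show ?thesis
      using lincomb_coeffs_unique[OF ind, of "\<lambda>b. (ys ! b) i" "\<lambda>b. (ys' ! b) i" a] a A.ws(1) by simp
  next
    case False
    then show ?thesis
      using tail_vecs_zero[OF A.ys_tail_vecs[OF a]] tail_vecs_zero[OF B.ys_tail_vecs[OF a]] by simp
  qed
  then have "ys = ys'" using A.ys(1) B.ys(1) by (intro nth_equalityI ext) auto
  with ws_eq show ?thesis by simp
qed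

lemma card_graph_parameters_le:
  assumes "k \<le> n"
  shows "card {ys. set ys \<subseteq> tail_vecs R n k \<and> length ys = k} * card (indep_lists R n (tail_vecs R n k) k)
    \<le> card (differentials R n)"
proof -
  let ?Ys = "{ys. set ys \<subseteq> tail_vecs R n k \<and> length ys = k}"
  let ?Ws = "indep_lists R n (tail_vecs R n k) k"
  let ?g = "\<lambda>(ys, ws). graph_differential R n k ys ws"
  have data: "graph_differential_data R n k ys ws" if "(ys, ws) \<in> ?Ys \<times> ?Ws" for ys ws
    using that assms by unfold_locales (auto simp: indep_lists_def)
  have "?g ` (?Ys \<times> ?Ws) \<subseteq> differentials R n"
    using graph_differential_data.graph_differential_in_differentials[OF data] by auto
  moreover have "inj_on ?g (?Ys \<times> ?Ws)"
    using graph_differential_inj[OF data data] by (intro inj_onI) (auto simp: indep_lists_def)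
  ultimately have "card (?Ys \<times> ?Ws) \<le> card (differentials R n)"
    using card_mono[OF finite_differentials] by (fastforce simp: card_image[symmetric])
  then show ?thesis by (simp add: card_cartesian_product)
qed

lemma card_differentials_ge:
  assumes k: "2 * k \<le> n"
  shows "real q ^ (2 * k * (n - k)) \<le> 2 ^ k * real (card (differentials R n))"
proof -
  let ?Ys = "{ys. set ys \<subseteq> tail_vecs R n k \<and> length ys = k}"
  let ?Ws = "indep_lists R n (tail_vecs R n k) k"
  have "2 * k * (n - k) = (n - k) * k + (n - k) * k" by simp
  then have "real q ^ (2 * k * (n - k)) / 2 ^ k = real q ^ ((n - k) * k) * (real q ^ (n - k) / 2) ^ k"
    by (simp only: power_add) (simp add: power_divide power_mult)
  also have "\<dots> \<le> real (card ?Ys) * real (card ?Ws)"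
  proof (rule mult_mono)
    show "real q ^ ((n - k) * k) \<le> real (card ?Ys)"
      using card_lists_length_eq[OF finite_tail_vecs] card_tail_vecs by (simp add: power_mult)
    show "(real q ^ (n - k) / 2) ^ k \<le> real (card ?Ws)"
      using card_indep_lists_ge[OF lin_subspace_tail_vecs card_tail_vecs] k by simp
  qed auto
  also have "\<dots> \<le> real (card (differentials R n))"
    using card_graph_parameters_le[of k] k by (simp flip: of_nat_mult)
  finally show ?thesis by (simp add: field_simps)
qed

end

section \<open>Homology of a random differential\<close>

lemma mult_diff_less_mult_diff:
  fixes m k n :: nat
  assumes "m < k" "2 * k \<le> n"
  shows "m * (n - m) < k * (n - k)"
proof -
  obtain d where k: "k = m + Suc d" using less_imp_Suc_add[OF assms(1)] by auto
  obtain a where n: "n = k + a" using assms(2) le_Suc_ex[of k n] by auto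
  have "m < a" using assms n by simp
  then have "Suc d * m < Suc d * a" by (intro mult_strict_left_mono) auto
  then have "m * (Suc d + a) < (m + Suc d) * a" by (simp add: algebra_simps)
  then show ?thesis using k n by simp
qed

context finite_field_space
begin

lemma card_lower_rank_differentials_le:
  assumes "2 * k \<le> n" "0 < k"
  shows "real (card {M \<in> differentials R n. mat_rank R n M < k})
    \<le> real k * 2 ^ k * real q ^ (2 * k * (n - k) - 1)"
proof -
  let ?D = "\<lambda>m. {M \<in> differentials R n. mat_rank R n M = m}"
  have "{M \<in> differentials R n. mat_rank R n M < k} = (\<Union>m\<in>{..<k}. ?D m)" by auto
  then have "card {M \<in> differentials R n. mat_rank R n M < k} \<le> (\<Sum>m\<in>{..<k}. card (?D m))"
    by (simp add: card_UN_le)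
  then have "real (card {M \<in> differentials R n. mat_rank R n M < k}) \<le> (\<Sum>m\<in>{..<k}. real (card (?D m)))"
    by (simp only: of_nat_le_iff of_nat_sum[symmetric])
  also have "\<dots> \<le> (\<Sum>m\<in>{..<k}. 2 ^ k * real q ^ (2 * k * (n - k) - 1))"
  proof (rule sum_mono)
    fix m assume "m \<in> {..<k}"
    then have m: "m < k" by simp
    have "real (card (?D m)) \<le> 2 ^ m * real q ^ (2 * m * (n - m))"
      using m assms by (intro card_rank_differentials_le) simp
    also have "\<dots> \<le> 2 ^ k * real q ^ (2 * k * (n - k) - 1)"
    proof (rule mult_mono)
      have "2 * m * (n - m) \<le> 2 * k * (n - k) - 1"
        using mult_diff_less_mult_diff[OF m assms(1)] by simp
      then show "real q ^ (2 * m * (n - m)) \<le> real q ^ (2 * k * (n - k) - 1)"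
        using card_carrier_ge_2 by (intro power_increasing) auto
    qed (use m in auto)
    finally show "real (card (?D m)) \<le> 2 ^ k * real q ^ (2 * k * (n - k) - 1)" .
  qed
  finally show ?thesis by simp
qed

lemma lower_rank_differentials_proportion_le:
  assumes "2 * k \<le> n"
  shows "real (card {M \<in> differentials R n. mat_rank R n M < k}) / real (card (differentials R n))
    \<le> real k * 4 ^ k / real q"
proof (cases "k = 0")
  case False
  let ?e = "2 * k * (n - k)"
  have "0 < n - k" using False assms by linarith
  then have "0 < ?e" using False by simp
  have "real (card {M \<in> differentials R n. mat_rank R n M < k}) * real q
      \<le> real k * 2 ^ k * real q ^ (?e - 1) * real q"
    using card_lower_rank_differentials_le[OF assms] False by (intro mult_right_mono) auto
  also have "\<dots> = real k * 2 ^ k * real q ^ ?e"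
    using power_minus_mult[OF \<open>0 < ?e\<close>, of "real q"] by (simp add: mult.assoc)
  also have "\<dots> \<le> real k * 2 ^ k * (2 ^ k * real (card (differentials R n)))"
    using card_differentials_ge[OF assms] by (intro mult_left_mono) auto
  also have "\<dots> = real k * 4 ^ k * real (card (differentials R n))"
    by (simp flip: power_mult_distrib)
  finally show ?thesis
    using card_differentials_pos card_carrier_ge_2 by (simp add: field_simps)
qed simp

lemma prob_hom_bounds:
  shows "\<bar>prob_hom R n (n mod 2) - 1\<bar> \<le> real (n div 2) * 4 ^ (n div 2) / real q"
    and "r \<noteq> n mod 2 \<Longrightarrow> \<bar>prob_hom R n r\<bar> \<le> real (n div 2) * 4 ^ (n div 2) / real q"
proof -
  let ?D = "differentials R n" and ?k = "n div 2"
  let ?Bad = "{M \<in> ?D. mat_rank R n M < ?k}"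
  have "2 * r \<le> n \<Longrightarrow> n - 2 * r = n mod 2 \<longleftrightarrow> \<not> r < ?k" for r by presburger
  then have good_iff: "homology_dim R n M = n mod 2 \<longleftrightarrow> M \<notin> ?Bad" if "M \<in> ?D" for M
    using homology_dim_differential[OF that] differential_rank_le[OF that] that by auto
  have D_pos: "real (card ?D) > 0" using card_differentials_pos by simp
  have bad: "real (card ?Bad) / real (card ?D) \<le> real ?k * 4 ^ ?k / real q"
    by (rule lower_rank_differentials_proportion_le) simp
  have "{M \<in> ?D. homology_dim R n M = n mod 2} = ?D - ?Bad" using good_iff by auto
  then have "prob_hom R n (n mod 2) = (real (card ?D) - real (card ?Bad)) / real (card ?D)"
    unfolding prob_hom_def using finite_differentials
    by (simp add: card_Diff_subset of_nat_diff card_mono)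
  also have "\<dots> = 1 - real (card ?Bad) / real (card ?D)" using D_pos by (simp add: field_simps)
  finally show "\<bar>prob_hom R n (n mod 2) - 1\<bar> \<le> real ?k * 4 ^ ?k / real q"
    using bad by simp
  assume "r \<noteq> n mod 2"
  then have "{M \<in> ?D. homology_dim R n M = r} \<subseteq> ?Bad" using good_iff by auto
  then have "prob_hom R n r \<le> real (card ?Bad) / real (card ?D)"
    unfolding prob_hom_def using finite_differentials D_pos
    by (intro divide_right_mono) (auto intro: card_mono)
  then show "\<bar>prob_hom R n r\<bar> \<le> real ?k * 4 ^ ?k / real q"
    using bad by (simp add: prob_hom_def)
qed

end

lemma eventually_less_for_large_fields:
  fixes f :: "('a, 'b) ring_scheme \<Rightarrow> real"
  assumes "\<epsilon> > 0"
    and bound: "\<And>R :: ('a, 'b) ring_scheme. finite_field_space R \<Longrightarrow> \<bar>f R\<bar> \<le> C / real (card (carrier R))"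
  shows "\<exists>Q::nat. \<forall>R :: ('a, 'b) ring_scheme. field R \<and> finite (carrier R) \<and> Q \<le> card (carrier R) \<longrightarrow> \<bar>f R\<bar> < \<epsilon>"
proof (intro exI allI impI)
  fix R :: "('a, 'b) ring_scheme" assume R: "field R \<and> finite (carrier R) \<and> nat \<lceil>C / \<epsilon>\<rceil> + 1 \<le> card (carrier R)"
  then have "C / \<epsilon> < real (card (carrier R))" by linarith
  then have "C / real (card (carrier R)) < \<epsilon>" using assms(1) R by (simp add: field_simps)
  moreover have "finite_field_space R"
    using R by (simp add: finite_field_space_def finite_field_space_axioms_def)
  ultimately show "\<bar>f R\<bar> < \<epsilon>" using bound by fastforce
qed

theorem theorem1:
  fixes n :: nat
  assumes "n > 0"
  shows "(\<forall>r::nat. r > 1 \<and> r mod 2 = n mod 2 \<longrightarrow>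
            (\<forall>\<epsilon>>0. \<exists>Q::nat. \<forall>R :: 'a ring. field R \<and> finite (carrier R) \<and> card (carrier R) \<ge> Q
               \<longrightarrow> \<bar>prob_hom R n r - 0\<bar> < \<epsilon>))
       \<and> (even n \<longrightarrow> (\<forall>\<epsilon>>0. \<exists>Q::nat. \<forall>R :: 'a ring. field R \<and> finite (carrier R) \<and> card (carrier R) \<ge> Q
               \<longrightarrow> \<bar>prob_hom R n 0 - 1\<bar> < \<epsilon>))
       \<and> (odd n \<longrightarrow> (\<forall>\<epsilon>>0. \<exists>Q::nat. \<forall>R :: 'a ring. field R \<and> finite (carrier R) \<and> card (carrier R) \<ge> Q
               \<longrightarrow> \<bar>prob_hom R n 1 - 1\<bar> < \<epsilon>))"
proof -
  have converge: "\<exists>Q::nat. \<forall>R :: 'a ring. field R \<and> finite (carrier R) \<and> card (carrier R) \<ge> Q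
      \<longrightarrow> \<bar>prob_hom R n r - p\<bar> < \<epsilon>"
    if "0 < \<epsilon>" and "r = n mod 2 \<and> p = 1 \<or> r \<noteq> n mod 2 \<and> p = 0" for r :: nat and p \<epsilon> :: real
    using that(2) finite_field_space.prob_hom_bounds[where n=n]
    by (intro eventually_less_for_large_fields[OF that(1)]) auto
  have "r \<noteq> n mod 2" if "1 < r" for r :: nat using that by presburger
  then show ?thesis
    using converge[where p=0] converge[where p=1] by (auto simp: even_iff_mod_2_eq_zero odd_iff_mod_2_eq_one)
qed

end
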